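(* For the initial pair $(t,x)$, the following are equivalent. i) There exists a unique $v^*\in l^2(\mathbb{T}_t; \mathbb{R}^{m_2})$ such that $J_2(k, X_k^*; {\alpha^t}(x, v^* )|_{\mathbb{T}_k}, v^*|_{\mathbb{T}_k})\leq J_2(k, X_k^*; {\alpha^t}(x, v^{*-k})|_{\mathbb{T}_k}, (v_k, v^*|_{\mathbb{T}_{k+1}}))$ for any $k\in\mathbb{T}_t$ and any $v_k\in l^2(k; \mathbb{R}^{m_2})$, where $X^*_{k+1}=AX^*_k+B_1[\alpha^t(x, v^* )]_{k}+B_2v^*_k$, $X^*_t=x$, and $v^{*-k}_\ell=v_k$ for $\ell=k$, $v^{*-k}_\ell=v^*_\ell$ for $\ell\neq k$, $\ell\in\mathbb{T}_t$ (the state inside the right-hand cost starts at $X_k^*$ at time $k$ and is driven by $\alpha^t(x,v^{*-k})$, $v^{*-k}$). ii) There exists a unique $v^*\in l^2(\mathbb{T}_t; \mathbb{R}^{m_2})$ such that, for all $k\in\mathbb{T}_t$, \begin{eqnarray*} 0&=&\Big{[}\widetilde{B}_{k}^T-\sum_{i=t}^{k-1}D_i^{(k)}(H_k^1)^TB_1^T\Big{]}Z_{k+1}^*+\Big(\widetilde{B}_{k}^T+\sum_{i=t}^{k-1}D_i^{(k)}\widetilde{A}_k^T\Big)\overline{Z}_{k+1}^{(k)*}+\Big{[}(H^2_k)^TR_2H_k^1+\sum_{i=t}^{k-1}D_i^{(k)}(H_k^1)^TR_2H_k^1\Big{]}X_k^*\\ &&+\Big{[}W_2+(H^2_k)^TR_2H^2_k+\sum_{i=t}^{k-1}D_i^{(k)}(H_k^1)^TR_2H^2_k\Big{]}v_k^*+\Big{[}(H^2_k)^TR_2H_k^3+\sum_{i=t}^{k-1}D_i^{(k)}(H_k^1)^TR_2H_k^3\Big{]}\pi_{k+1}^*,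 \end{eqnarray*} where $Z_k^*=Q_2X_{k}^*+A^TZ_{k+1}^*$, $Z_{N}^*=G_2X_N^*$; for each $k\in\mathbb{T}_t$, $\overline{Z}_{\ell}^{(k)*}=(H_{\ell}^1)^TR_2(H_{\ell}^1X_{\ell}^*+H^2_{\ell}v_{\ell}^*+H_{\ell}^3\pi_{\ell+1}^* )-(H_{\ell}^1)^TB_1^TZ_{\ell+1}^*+\widetilde{A}_{\ell}^T\overline{Z}_{\ell+1}^{(k)*}$, $\ell\in\mathbb{T}_k$, $\overline{Z}_{N}^{(k)*}=0$; and $X_{k+1}^*=\widetilde{A}_kX_k^*+\widetilde{B}_kv_{k}^*+\widetilde{C}_k\pi_{k+1}^*$, $\pi_k^*=C_k^Tv_k^*+\widetilde{A}_k^T\pi_{k+1}^*$, $X_t^*=x$, $\pi_{N}^*=0$. In this case, the $v^*$ of ii) is the one of i).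
   Context: Let $N>2$ be an integer, $\mathbb{T}_t=\{t,\ldots,N-1\}$, $l^2(\mathbb{T}_t;\mathbb{R}^m)$ the space of $\mathbb{R}^m$-valued sequences on $\mathbb{T}_t$, $l^2(k;\mathbb{R}^m)=\mathbb{R}^m$, $v|_{\mathbb{T}_k}=(v_k,\ldots,v_{N-1})$. System $X_{k+1}=AX_k+B_1u_k+B_2v_k$, $X_t=x$; costs $J_i(t,x;u,v)=\sum_{k=t}^{N-1}(X_k^TQ_iX_k+u_k^TR_iu_k+v_k^TW_iv_k)+X_N^TG_iX_N$, $i=1,2$, with $Q_i,G_i,R_i,W_i$ nonnegative definite; $J_i(k,y;\cdot,\cdot)$ is the same functional started at time $k$ from $y$. Assume $M_k=B_1^TP_{k+1}B_1+R_1>0$, $k\in\mathbb{T}_t$, where $P_k=Q_1+A^TP_{k+1}A-A^TP_{k+1}B_1M_k^{-1}B_1^TP_{k+1}A$, $P_N=G_1$. Set $H^1_k=M_k^{-1}B_1^TP_{k+1}A$, $H^2_k=M_k^{-1}B_1^TP_{k+1}B_2$, $H^3_k=M_k^{-1}B_1^T$, $\widetilde{A}_k=A-B_1H^1_k$, $\widetilde{B}_k=B_2-B_1H^2_k$, $\widetilde{C}_k=-B_1H^3_k$, $C_k=(B_2^T-B_2^TP_{k+1}B_1M_k^{-1}B_1^T)P_{k+1}A$, and $D_i^{(k)}=C_k\widetilde{A}_{k-1}\cdots \widetilde{A}_{i+1}\widetilde{C}_i^T\widetilde{A}_{i+1}^T \cdots \widetilde{A}_{k-1}^T$ (empty products equal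 $I$). The follower's equilibrium response map is $[\alpha^t(x,v)]_k=-(H^1_kX_k+H^2_kv_k+H^3_k\pi_{k+1})$, where $X_{k+1}=\widetilde{A}_kX_k+\widetilde{B}_kv_k+\widetilde{C}_k\pi_{k+1}$, $\pi_k=C_k^Tv_k+\widetilde{A}_k^T\pi_{k+1}$, $X_t=x$, $\pi_N=0$. *)

theory Defs
  imports "HOL-Analysis.Analysis"
begin

function bwd :: "(nat \<Rightarrow> 'a \<Rightarrow> 'a) \<Rightarrow> 'a \<Rightarrow> nat \<Rightarrow> nat \<Rightarrow> 'a" where
  "bwd F b N k = (if N \<le> k then b else F k (bwd F b N (Suc k)))"
  by pat_completeness auto
termination by (relation "Wellfounded.measure (\<lambda>(F, b, N, k). N - k)") auto

fun fwd :: "(nat \<Rightarrow> 'a \<Rightarrow> 'a) \<Rightarrow> 'a \<Rightarrow> nat \<Rightarrow> nat \<Rightarrow> 'a" where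
  "fwd F x t 0 = x"
| "fwd F x t (Suc k) = (if Suc k \<le> t then x else F k (fwd F x t k))"

text \<open>Ordered product F (k-1) ** ... ** F (i+1), identity if empty.\<close>
fun aprod :: "(nat \<Rightarrow> real^'n^'n) \<Rightarrow> nat \<Rightarrow> nat \<Rightarrow> real^'n^'n" where
  "aprod F i 0 = mat 1"
| "aprod F i (Suc k) = (if Suc k \<le> Suc i then mat 1 else F k ** aprod F i k)"

definition nnd :: "real^'n^'n \<Rightarrow> bool" where
  "nnd M \<longleftrightarrow> transpose M = M \<and> (\<forall>y. 0 \<le> y \<bullet> (M *v y))"

definition posdef :: "real^'n^'n \<Rightarrow> bool" where
  "posdef M \<longleftrightarrow> (\<forall>y. y \<noteq> 0 \<longrightarrow> 0 < y \<bullet> (M *v y))"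

record ('n, 'm1, 'm2) lqgame =
  sA  :: "real^'n^'n"
  sB1 :: "real^'m1^'n"
  sB2 :: "real^'m2^'n"
  sQ1 :: "real^'n^'n"
  sQ2 :: "real^'n^'n"
  sR1 :: "real^'m1^'m1"
  sR2 :: "real^'m1^'m1"
  sW1 :: "real^'m2^'m2"
  sW2 :: "real^'m2^'m2"
  sG1 :: "real^'n^'n"
  sG2 :: "real^'n^'n"
  sN  :: nat

definition Ric :: "('n::finite, 'm1::finite, 'm2::finite) lqgame \<Rightarrow> nat \<Rightarrow> real^'n^'n" where
  "Ric S = bwd (\<lambda>_ P. sQ1 S + transpose (sA S) ** P ** sA S
      - transpose (sA S) ** P ** sB1 S
        ** matrix_inv (transpose (sB1 S) ** P ** sB1 S + sR1 S)
        ** transpose (sB1 S) ** P ** sA S) (sG1 S) (sN S)"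

definition Mk :: "('n::finite, 'm1::finite, 'm2::finite) lqgame \<Rightarrow> nat \<Rightarrow> real^'m1^'m1" where
  "Mk S k = transpose (sB1 S) ** Ric S (Suc k) ** sB1 S + sR1 S"

definition H1 :: "('n::finite, 'm1::finite, 'm2::finite) lqgame \<Rightarrow> nat \<Rightarrow> real^'n^'m1" where
  "H1 S k = matrix_inv (Mk S k) ** transpose (sB1 S) ** Ric S (Suc k) ** sA S"

definition H2 :: "('n::finite, 'm1::finite, 'm2::finite) lqgame \<Rightarrow> nat \<Rightarrow> real^'m2^'m1" where
  "H2 S k = matrix_inv (Mk S k) ** transpose (sB1 S) ** Ric S (Suc k) ** sB2 S"

definition H3 :: "('n::finite, 'm1::finite, 'm2::finite) lqgame \<Rightarrow> nat \<Rightarrow> real^'n^'m1" where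
  "H3 S k = matrix_inv (Mk S k) ** transpose (sB1 S)"

definition At :: "('n::finite, 'm1::finite, 'm2::finite) lqgame \<Rightarrow> nat \<Rightarrow> real^'n^'n" where
  "At S k = sA S - sB1 S ** H1 S k"

definition Bt :: "('n::finite, 'm1::finite, 'm2::finite) lqgame \<Rightarrow> nat \<Rightarrow> real^'m2^'n" where
  "Bt S k = sB2 S - sB1 S ** H2 S k"

definition Ct :: "('n::finite, 'm1::finite, 'm2::finite) lqgame \<Rightarrow> nat \<Rightarrow> real^'n^'n" where
  "Ct S k = - (sB1 S ** H3 S k)"

definition Cm :: "('n::finite, 'm1::finite, 'm2::finite) lqgame \<Rightarrow> nat \<Rightarrow> real^'n^'m2" where
  "Cm S k = (transpose (sB2 S) - transpose (sB2 S) ** Ric S (Suc k) ** sB1 S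
              ** matrix_inv (Mk S k) ** transpose (sB1 S)) ** Ric S (Suc k) ** sA S"

definition Dm :: "('n::finite, 'm1::finite, 'm2::finite) lqgame \<Rightarrow> nat \<Rightarrow> nat \<Rightarrow> real^'n^'m2" where
  "Dm S i k = Cm S k ** aprod (At S) i k ** transpose (Ct S i) ** transpose (aprod (At S) i k)"

definition piS :: "('n::finite, 'm1::finite, 'm2::finite) lqgame \<Rightarrow> (nat \<Rightarrow> real^'m2) \<Rightarrow> nat \<Rightarrow> real^'n" where
  "piS S v = bwd (\<lambda>k p. transpose (Cm S k) *v v k + transpose (At S k) *v p) 0 (sN S)"

definition XS :: "('n::finite, 'm1::finite, 'm2::finite) lqgame \<Rightarrow> nat \<Rightarrow> real^'n \<Rightarrow> (nat \<Rightarrow> real^'m2) \<Rightarrow> nat \<Rightarrow> real^'n" where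
  "XS S t x v = fwd (\<lambda>k X. At S k *v X + Bt S k *v v k + Ct S k *v piS S v (Suc k)) x t"

definition alpha :: "('n::finite, 'm1::finite, 'm2::finite) lqgame \<Rightarrow> nat \<Rightarrow> real^'n \<Rightarrow> (nat \<Rightarrow> real^'m2) \<Rightarrow> nat \<Rightarrow> real^'m1" where
  "alpha S t x v k = - (H1 S k *v XS S t x v k + H2 S k *v v k + H3 S k *v piS S v (Suc k))"

definition traj :: "('n::finite, 'm1::finite, 'm2::finite) lqgame \<Rightarrow> nat \<Rightarrow> real^'n \<Rightarrow> (nat \<Rightarrow> real^'m1) \<Rightarrow> (nat \<Rightarrow> real^'m2) \<Rightarrow> nat \<Rightarrow> real^'n" where
  "traj S k y u v = fwd (\<lambda>j X. sA S *v X + sB1 S *v u j + sB2 S *v v j) y k"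

definition J2 :: "('n::finite, 'm1::finite, 'm2::finite) lqgame \<Rightarrow> nat \<Rightarrow> real^'n \<Rightarrow> (nat \<Rightarrow> real^'m1) \<Rightarrow> (nat \<Rightarrow> real^'m2) \<Rightarrow> real" where
  "J2 S k y u v = (let X = traj S k y u v in
     (\<Sum>j\<in>{k..<sN S}. X j \<bullet> (sQ2 S *v X j) + u j \<bullet> (sR2 S *v u j) + v j \<bullet> (sW2 S *v v j))
     + X (sN S) \<bullet> (sG2 S *v X (sN S)))"

definition cond_i :: "('n::finite, 'm1::finite, 'm2::finite) lqgame \<Rightarrow> nat \<Rightarrow> real^'n \<Rightarrow> (nat \<Rightarrow> real^'m2) \<Rightarrow> bool" where
  "cond_i S t x vs \<longleftrightarrow>
     (let Xs = traj S t x (alpha S t x vs) vs in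
      \<forall>k\<in>{t..<sN S}. \<forall>w :: real^'m2.
        J2 S k (Xs k) (alpha S t x vs) vs
          \<le> J2 S k (Xs k) (alpha S t x (vs(k := w))) (vs(k := w)))"

definition ZS :: "('n::finite, 'm1::finite, 'm2::finite) lqgame \<Rightarrow> nat \<Rightarrow> real^'n \<Rightarrow> (nat \<Rightarrow> real^'m2) \<Rightarrow> nat \<Rightarrow> real^'n" where
  "ZS S t x v = (let X = XS S t x v in
     bwd (\<lambda>k z. sQ2 S *v X k + transpose (sA S) *v z) (sG2 S *v X (sN S)) (sN S))"

text \<open>Zbar^{(k)}_l for l in T_k (the recursion does not depend on k, so Zbar^{(k)}_l = ZbarS l):
  Zbar_l = H1_l^T R2 (H1_l X_l + H2_l v_l + H3_l pi_{l+1}) - H1_l^T B1^T Z_{l+1} + At_l^T Zbar_{l+1}, Zbar_N = 0\<close>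
definition ZbarS :: "('n::finite, 'm1::finite, 'm2::finite) lqgame \<Rightarrow> nat \<Rightarrow> real^'n \<Rightarrow> (nat \<Rightarrow> real^'m2) \<Rightarrow> nat \<Rightarrow> nat \<Rightarrow> real^'n" where
  "ZbarS S t x v k = (let X = XS S t x v; p = piS S v; Z = ZS S t x v in
     bwd (\<lambda>l z. transpose (H1 S l) *v (sR2 S *v (H1 S l *v X l + H2 S l *v v l + H3 S l *v p (Suc l)))
               - transpose (H1 S l) *v (transpose (sB1 S) *v Z (Suc l))
               + transpose (At S l) *v z) 0 (sN S))"

definition cond_ii :: "('n::finite, 'm1::finite, 'm2::finite) lqgame \<Rightarrow> nat \<Rightarrow> real^'n \<Rightarrow> (nat \<Rightarrow> real^'m2) \<Rightarrow> bool" where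
  "cond_ii S t x vs \<longleftrightarrow>
     (let X = XS S t x vs; p = piS S vs; Z = ZS S t x vs; R2 = sR2 S in
      \<forall>k\<in>{t..<sN S}.
        let D = (\<lambda>i. Dm S i k); Zb = ZbarS S t x vs k in
        (transpose (Bt S k) - (\<Sum>i\<in>{t..<k}. D i ** transpose (H1 S k) ** transpose (sB1 S))) *v Z (Suc k)
      + (transpose (Bt S k) + (\<Sum>i\<in>{t..<k}. D i ** transpose (At S k))) *v Zb (Suc k)
      + (transpose (H2 S k) ** R2 ** H1 S k + (\<Sum>i\<in>{t..<k}. D i ** transpose (H1 S k) ** R2 ** H1 S k)) *v X k
      + (sW2 S + transpose (H2 S k) ** R2 ** H2 S k
           + (\<Sum>i\<in>{t..<k}. D i ** transpose (H1 S k) ** R2 ** H2 S k)) *v vs k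
      + (transpose (H2 S k) ** R2 ** H3 S k + (\<Sum>i\<in>{t..<k}. D i ** transpose (H1 S k) ** R2 ** H3 S k)) *v p (Suc k)
      = 0)"

text \<open>Unique existence in l^2(T_t; R^m2): sequences are identified when they agree on T_t.\<close>
definition uniq_on :: "nat \<Rightarrow> nat \<Rightarrow> ((nat \<Rightarrow> 'a) \<Rightarrow> bool) \<Rightarrow> bool" where
  "uniq_on t N P \<longleftrightarrow> (\<exists>v. P v \<and> (\<forall>w. P w \<longrightarrow> (\<forall>k\<in>{t..<N}. w k = v k)))"

end

theory Submission
  imports Defs
begin

(* Fix a candidate v*. The follower's response alpha^t(x, .) is affine, so the leader's cost at
   stage k, as a function of the single deviation v_k, is a quadratic polynomial whose curvature
   is nonnegative because all weights are nonnegative definite. Hence the inequality of i) at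
   stage k holds iff the gradient of this quadratic vanishes. An impulse d in v_k changes the
   earlier states only through pi, giving the change sum_i (D_i^(k))^T d of X_k; summing by parts
   against the costate Z of the state and the costate Zbar of the follower's feedback after
   time k turns the gradient into the left-hand side of ii). So i) and ii) have the same
   solutions, in particular the same unique one. *)

declare transpose_matrix_vector [simp del] vector_transpose_matrix [simp del]

lemma bwd_ge: "N \<le> k \<Longrightarrow> bwd F b N k = b"
  by (subst bwd.simps) simp

lemma bwd_less: "k < N \<Longrightarrow> bwd F b N k = F k (bwd F b N (Suc k))"
  by (subst bwd.simps) simp

declare bwd.simps [simp del]

lemma fwd_le: "k \<le> t \<Longrightarrow> fwd F x t k = x"
  by (cases k) auto

lemma nat_descending_induct [case_names beyond step]:
  assumes "\<And>k. N \<le> k \<Longrightarrow> P k" and "\<And>k. k < N \<Longrightarrow> P (Suc k) \<Longrightarrow> P k"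
  shows "P k"
proof (cases "N \<le> k")
  case False
  then have "k \<le> N" by simp
  then show ?thesis
    by (induction k rule: inc_induct) (use assms in auto)
qed (use assms in auto)

lemma aprod_le: "j \<le> Suc i \<Longrightarrow> aprod F i j = mat 1"
  by (cases j) auto

lemma aprod_split_lowest: "Suc i < k \<Longrightarrow> aprod F i k = aprod F (Suc i) k ** F (Suc i)"
proof (induction k)
  case (Suc k)
  then show ?case
    by (cases "Suc i = k") (auto simp: aprod_le matrix_mul_assoc)
qed simp

lemma matrix_vector_mult_uminus_left: "(- A) *v x = - (A *v (x::real^'n))"
  by (simp add: matrix_vector_mult_def vec_eq_iff sum_negf)

lemma matrix_vector_mult_uminus_right: "A *v (- x) = - (A *v (x::real^'n))"
  by (simp add: matrix_vector_mult_def vec_eq_iff sum_negf)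

lemma inner_transpose_right: "(x::real^'n) \<bullet> (transpose A *v y) = (A *v x) \<bullet> y"
  by (metis dot_lmul_matrix inner_commute transpose_matrix_vector)

lemma sum_matrix_vector_mult: "(\<Sum>i\<in>I. f i) *v (y::real^'n) = (\<Sum>i\<in>I. f i *v y)"
  by (induction I rule: infinite_finite_induct) (auto simp: matrix_vector_mult_add_rdistrib)

lemma matrix_vector_mult_sum: "A *v (\<Sum>i\<in>I. f i) = (\<Sum>i\<in>I. A *v (f i::real^'n))"
  by (induction I rule: infinite_finite_induct) (auto simp: matrix_vector_right_distrib)

lemma matrix_add_rdistrib: "(A + B) ** C = A ** C + B ** (C::real^'n^'m)"
  by (vector matrix_matrix_mult_def sum.distrib distrib_right)

lemma matrix_mult_sum_left: "(\<Sum>i\<in>I. f i) ** M = (\<Sum>i\<in>I. f i ** (M::real^'n^'m))"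
  by (induction I rule: infinite_finite_induct) (auto simp: matrix_add_rdistrib)

lemma inner_sum_transpose_left:
  "(\<Sum>i\<in>I. transpose (D i) *v (d::real^'m)) \<bullet> y = d \<bullet> ((\<Sum>i\<in>I. D i) *v y)"
  by (simp add: inner_sum_left sum_matrix_vector_mult inner_sum_right inner_transpose_right inner_commute)

lemma quadratic_form_add_scaleR:
  fixes a b :: "real^'n"
  assumes "transpose Q = Q"
  shows "(a + s *\<^sub>R b) \<bullet> (Q *v (a + s *\<^sub>R b))
    = a \<bullet> (Q *v a) + 2 * s * (b \<bullet> (Q *v a)) + s\<^sup>2 * (b \<bullet> (Q *v b))"
proof -
  have "a \<bullet> (Q *v b) = b \<bullet> (Q *v a)"
    by (metis assms inner_transpose_right inner_commute)
  then show ?thesis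
    by (simp add: matrix_vector_right_distrib matrix_vector_mult_scaleR inner_add_left inner_add_right
        power2_eq_square algebra_simps)
qed

lemma adjoint_summation_by_parts:
  fixes Y Z f q :: "nat \<Rightarrow> real^'n" and A :: "nat \<Rightarrow> real^'n^'n"
  assumes "m \<le> N"
    and state: "\<And>j. m \<le> j \<Longrightarrow> j < N \<Longrightarrow> Y (Suc j) = A j *v Y j + f j"
    and costate: "\<And>j. m \<le> j \<Longrightarrow> j < N \<Longrightarrow> Z j = q j + transpose (A j) *v Z (Suc j)"
  shows "(\<Sum>j=m..<N. Y j \<bullet> q j) + Y N \<bullet> Z N = Y m \<bullet> Z m + (\<Sum>j=m..<N. f j \<bullet> Z (Suc j))"
proof -
  have "(\<Sum>j=m..<N. f j \<bullet> Z (Suc j) - Y j \<bullet> q j) = (\<Sum>j=m..<N. Y (Suc j) \<bullet> Z (Suc j) - Y j \<bullet> Z j)"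
  proof (rule sum.cong)
    fix j assume "j \<in> {m..<N}"
    then show "f j \<bullet> Z (Suc j) - Y j \<bullet> q j = Y (Suc j) \<bullet> Z (Suc j) - Y j \<bullet> Z j"
      using state[of j] costate[of j] by (simp add: inner_add_left inner_add_right inner_transpose_right)
  qed simp
  also have "\<dots> = Y N \<bullet> Z N - Y m \<bullet> Z m"
    by (rule sum_Suc_diff'[OF \<open>m \<le> N\<close>])
  finally show ?thesis
    by (simp add: sum_subtractf algebra_simps)
qed

lemma quadratic_minimum_iff_gradient_zero:
  fixes h :: "'a::real_inner \<Rightarrow> real"
  assumes expansion: "\<And>d. \<exists>q\<ge>0. \<forall>r. h (v + r *\<^sub>R d) = h v + 2 * r * (d \<bullet> g) + r\<^sup>2 * q"
  shows "(\<forall>w. h v \<le> h w) \<longleftrightarrow> g = 0"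
proof
  assume minimal: "\<forall>w. h v \<le> h w"
  obtain q where "q \<ge> 0" and q: "\<And>r. h (v + r *\<^sub>R g) = h v + 2 * r * (g \<bullet> g) + r\<^sup>2 * q"
    using expansion[of g] by blast
  define G where "G = g \<bullet> g"
  (* a step against the gradient short enough that the curvature q cannot compensate *)
  define r where "r = - G / (q + 1)"
  have "2 * r * G + r\<^sup>2 * q = - G\<^sup>2 * (q + 2) / (q + 1)\<^sup>2"
    using \<open>q \<ge> 0\<close> by (simp add: r_def divide_simps power2_eq_square) (simp add: algebra_simps)
  moreover have "0 \<le> 2 * r * G + r\<^sup>2 * q"
    using minimal q[of r] unfolding G_def by (metis add.assoc le_add_same_cancel1)
  moreover have "0 \<le> G\<^sup>2 * (q + 2) / (q + 1)\<^sup>2"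
    using \<open>q \<ge> 0\<close> by simp
  ultimately have "G\<^sup>2 * (q + 2) / (q + 1)\<^sup>2 = 0"
    by linarith
  then have "G = 0"
    using \<open>q \<ge> 0\<close> by simp
  then show "g = 0"
    by (simp add: G_def)
next
  assume "g = 0"
  show "\<forall>w. h v \<le> h w"
  proof
    fix w
    obtain q where "q \<ge> 0" and q: "\<And>r. h (v + r *\<^sub>R (w - v)) = h v + 2 * r * ((w - v) \<bullet> g) + r\<^sup>2 * q"
      using expansion[of "w - v"] by blast
    show "h v \<le> h w"
      using q[of 1] \<open>g = 0\<close> \<open>q \<ge> 0\<close> by simp
  qed
qed

lemma piS_ge: "sN S \<le> k \<Longrightarrow> piS S v k = 0"
  by (simp add: piS_def bwd_ge)

lemma piS_less:
  "k < sN S \<Longrightarrow> piS S v k = transpose (Cm S k) *v v k + transpose (At S k) *v piS S v (Suc k)"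
  by (simp add: piS_def bwd_less)

lemma XS_le: "k \<le> t \<Longrightarrow> XS S t x v k = x"
  by (simp add: XS_def fwd_le)

lemma XS_Suc:
  "t \<le> k \<Longrightarrow> XS S t x v (Suc k) = At S k *v XS S t x v k + Bt S k *v v k + Ct S k *v piS S v (Suc k)"
  by (simp add: XS_def)

lemma traj_le: "j \<le> k \<Longrightarrow> traj S k y u v j = y"
  by (simp add: traj_def fwd_le)

lemma traj_Suc:
  "k \<le> j \<Longrightarrow> traj S k y u v (Suc j) = sA S *v traj S k y u v j + sB1 S *v u j + sB2 S *v v j"
  by (simp add: traj_def)

lemma ZS_last: "ZS S t x v (sN S) = sG2 S *v XS S t x v (sN S)"
  by (simp add: ZS_def Let_def bwd_ge)

lemma ZS_less:
  "j < sN S \<Longrightarrow> ZS S t x v j = sQ2 S *v XS S t x v j + transpose (sA S) *v ZS S t x v (Suc j)"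
  by (simp add: ZS_def Let_def bwd_less)

lemma ZbarS_last: "ZbarS S t x v k (sN S) = 0"
  by (simp add: ZbarS_def Let_def bwd_ge)

lemma ZbarS_less:
  "j < sN S \<Longrightarrow> ZbarS S t x v k j = - transpose (H1 S j) *v (sR2 S *v alpha S t x v j
      + transpose (sB1 S) *v ZS S t x v (Suc j)) + transpose (At S j) *v ZbarS S t x v k (Suc j)"
  by (simp add: ZbarS_def Let_def alpha_def bwd_less matrix_vector_mult_uminus_left matrix_vector_mult_uminus_right
      matrix_vector_right_distrib matrix_vector_mult_diff_distrib)

lemma piS_add_scaleR: "piS S (\<lambda>j. v j + s *\<^sub>R e j) k = piS S v k + s *\<^sub>R piS S e k"
proof (induction k rule: nat_descending_induct[where N = "sN S"])
  case (beyond k)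
  then show ?case by (simp add: piS_ge)
next
  case (step k)
  then show ?case
    by (simp add: piS_less matrix_vector_right_distrib matrix_vector_mult_scaleR algebra_simps)
qed

lemma XS_add_scaleR: "XS S t x (\<lambda>j. v j + s *\<^sub>R e j) k = XS S t x v k + s *\<^sub>R XS S t 0 e k"
proof (induction k)
  case (Suc k)
  then show ?case
    by (cases "t \<le> k")
      (simp_all add: XS_le XS_Suc piS_add_scaleR matrix_vector_right_distrib matrix_vector_mult_scaleR
        algebra_simps)
qed (simp add: XS_le)

lemma alpha_add_scaleR: "alpha S t x (\<lambda>j. v j + s *\<^sub>R e j) k = alpha S t x v k + s *\<^sub>R alpha S t 0 e k"
  by (simp add: alpha_def XS_add_scaleR piS_add_scaleR matrix_vector_right_distrib
      matrix_vector_mult_scaleR algebra_simps)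

lemma traj_add_scaleR:
  "traj S k y (\<lambda>j. u j + s *\<^sub>R du j) (\<lambda>j. v j + s *\<^sub>R dv j) j = traj S k y u v j + s *\<^sub>R traj S k 0 du dv j"
proof (induction j)
  case (Suc j)
  then show ?case
    by (cases "k \<le> j")
      (simp_all add: traj_le traj_Suc matrix_vector_right_distrib matrix_vector_mult_scaleR algebra_simps)
qed (simp add: traj_le)

lemma XS_Suc_open_loop:
  "t \<le> k \<Longrightarrow> XS S t x v (Suc k) = sA S *v XS S t x v k + sB1 S *v alpha S t x v k + sB2 S *v v k"
  by (simp add: XS_Suc alpha_def At_def Bt_def Ct_def matrix_vector_mult_diff_rdistrib
      matrix_vector_mult_uminus_left matrix_vector_mult_uminus_right matrix_vector_right_distrib
      matrix_vector_mul_assoc[symmetric] algebra_simps)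

lemma traj_eq_XS:
  assumes "t \<le> k" "k \<le> j"
  shows "traj S k (XS S t x v k) (alpha S t x v) v j = XS S t x v j"
  using assms(2)
proof (induction j)
  case (Suc j)
  then show ?case
    using assms(1) by (cases "k = Suc j") (simp_all add: traj_le traj_Suc XS_Suc_open_loop)
qed (simp add: traj_le)

definition J2_form :: "('n::finite, 'm1::finite, 'm2::finite) lqgame \<Rightarrow> nat
    \<Rightarrow> (nat \<Rightarrow> real^'n) \<Rightarrow> (nat \<Rightarrow> real^'m1) \<Rightarrow> (nat \<Rightarrow> real^'m2)
    \<Rightarrow> (nat \<Rightarrow> real^'n) \<Rightarrow> (nat \<Rightarrow> real^'m1) \<Rightarrow> (nat \<Rightarrow> real^'m2) \<Rightarrow> real" where
  "J2_form S k X u v X' u' v' =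
     (\<Sum>j\<in>{k..<sN S}. X' j \<bullet> (sQ2 S *v X j) + u' j \<bullet> (sR2 S *v u j) + v' j \<bullet> (sW2 S *v v j))
     + X' (sN S) \<bullet> (sG2 S *v X (sN S))"

lemma J2_eq_J2_form: "J2 S k y u v = J2_form S k (traj S k y u v) u v (traj S k y u v) u v"
  by (simp add: J2_def J2_form_def Let_def)

lemma J2_nonneg:
  assumes "nnd (sQ2 S)" "nnd (sR2 S)" "nnd (sW2 S)" "nnd (sG2 S)"
  shows "0 \<le> J2 S k y u v"
  unfolding J2_eq_J2_form J2_form_def
  using assms by (intro add_nonneg_nonneg sum_nonneg) (simp_all add: nnd_def)

lemma J2_add_scaleR:
  assumes "nnd (sQ2 S)" "nnd (sR2 S)" "nnd (sW2 S)" "nnd (sG2 S)"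
  shows "J2 S k y (\<lambda>j. u j + s *\<^sub>R du j) (\<lambda>j. v j + s *\<^sub>R dv j)
    = J2 S k y u v + 2 * s * J2_form S k (traj S k y u v) u v (traj S k 0 du dv) du dv
      + s\<^sup>2 * J2 S k 0 du dv"
proof -
  define Y where "Y = traj S k y u v"
  define dY where "dY = traj S k 0 du dv"
  have sym: "transpose (sQ2 S) = sQ2 S" "transpose (sR2 S) = sR2 S"
      "transpose (sW2 S) = sW2 S" "transpose (sG2 S) = sG2 S"
    using assms by (simp_all add: nnd_def)
  have traj: "traj S k y (\<lambda>j. u j + s *\<^sub>R du j) (\<lambda>j. v j + s *\<^sub>R dv j) = (\<lambda>j. Y j + s *\<^sub>R dY j)"
    by (rule ext) (simp add: traj_add_scaleR Y_def dY_def)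
  have stage: "(Y j + s *\<^sub>R dY j) \<bullet> (sQ2 S *v (Y j + s *\<^sub>R dY j))
        + (u j + s *\<^sub>R du j) \<bullet> (sR2 S *v (u j + s *\<^sub>R du j))
        + (v j + s *\<^sub>R dv j) \<bullet> (sW2 S *v (v j + s *\<^sub>R dv j))
     = (Y j \<bullet> (sQ2 S *v Y j) + u j \<bullet> (sR2 S *v u j) + v j \<bullet> (sW2 S *v v j))
       + 2 * s * (dY j \<bullet> (sQ2 S *v Y j) + du j \<bullet> (sR2 S *v u j) + dv j \<bullet> (sW2 S *v v j))
       + s\<^sup>2 * (dY j \<bullet> (sQ2 S *v dY j) + du j \<bullet> (sR2 S *v du j) + dv j \<bullet> (sW2 S *v dv j))" for j
    using quadratic_form_add_scaleR[OF sym(1)] quadratic_form_add_scaleR[OF sym(2)]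
      quadratic_form_add_scaleR[OF sym(3)]
    by (simp add: algebra_simps)
  show ?thesis
    unfolding J2_eq_J2_form J2_form_def traj Y_def[symmetric] dY_def[symmetric]
    by (simp only: stage quadratic_form_add_scaleR[OF sym(4)] sum.distrib sum_distrib_left[symmetric])
      (simp add: algebra_simps)
qed

lemma J2_form_state_cong:
  assumes "k \<le> sN S" "\<And>j. k \<le> j \<Longrightarrow> X j = X' j"
  shows "J2_form S k X u v Y du dv = J2_form S k X' u v Y du dv"
  using assms by (simp add: J2_form_def)

(* The left-hand side of ii), with the sums over D_i^(k) collected into a single factor. *)
definition leader_gradient :: "('n::finite, 'm1::finite, 'm2::finite) lqgame
    \<Rightarrow> nat \<Rightarrow> real^'n \<Rightarrow> (nat \<Rightarrow> real^'m2) \<Rightarrow> nat \<Rightarrow> real^'m2" where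
  "leader_gradient S t x v k =
     (let u = alpha S t x v k; Z = ZS S t x v (Suc k); Zb = ZbarS S t x v k (Suc k) in
      transpose (Bt S k) *v (Z + Zb) + sW2 S *v v k - transpose (H2 S k) *v (sR2 S *v u)
      + (\<Sum>i=t..<k. Dm S i k) *v (transpose (At S k) *v Zb
          - transpose (H1 S k) *v (sR2 S *v u + transpose (sB1 S) *v Z)))"

lemma cond_ii_iff_leader_gradient:
  "cond_ii S t x v \<longleftrightarrow> (\<forall>k\<in>{t..<sN S}. leader_gradient S t x v k = 0)"
  unfolding cond_ii_def leader_gradient_def Let_def
  by (simp add: matrix_mult_sum_left[symmetric] matrix_vector_mul_assoc[symmetric] alpha_def
      matrix_vector_right_distrib matrix_vector_mult_diff_distrib matrix_vector_mult_add_rdistrib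
      matrix_vector_mult_diff_rdistrib matrix_vector_mult_uminus_right algebra_simps)

lemma piS_impulse_after: "k < j \<Longrightarrow> piS S ((\<lambda>_. 0)(k := d)) j = 0"
  by (induction j rule: nat_descending_induct[where N = "sN S"]) (simp_all add: piS_ge piS_less)

lemma piS_impulse_before:
  assumes "k < sN S"
  shows "i < k \<Longrightarrow>
    piS S ((\<lambda>_. 0)(k := d)) (Suc i) = transpose (aprod (At S) i k) *v (transpose (Cm S k) *v d)"
proof (induction i rule: nat_descending_induct[where N = k])
  case (step i)
  show ?case
  proof (cases "Suc i = k")
    case True
    have "piS S ((\<lambda>_. 0)(k := d)) k = transpose (Cm S k) *v d"
      using assms piS_impulse_after[of k "Suc k" S d] piS_less[of k S "(\<lambda>_. 0)(k := d)"] by simp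
    then show ?thesis
      using True by (simp add: aprod_le fun_upd_def)
  next
    case False
    then have "Suc i < k"
      using step.prems by simp
    then show ?thesis
      using assms step.IH aprod_split_lowest[of i k "At S"]
      by (simp add: piS_less matrix_transpose_mul matrix_vector_mul_assoc matrix_mul_assoc)
  qed
qed simp

lemma XS_impulse_until:
  "t \<le> j \<Longrightarrow> j \<le> k \<Longrightarrow> XS S t 0 ((\<lambda>_. 0)(k := d)) j
     = (\<Sum>i=t..<j. aprod (At S) i j *v (Ct S i *v piS S ((\<lambda>_. 0)(k := d)) (Suc i)))"
proof (induction j)
  case (Suc j)
  show ?case
  proof (cases "Suc j = t")
    case False
    then have "t \<le> j" "j < k"
      using Suc.prems by auto
    then show ?thesis
      using Suc.IH
      by (simp add: XS_Suc matrix_vector_mult_sum matrix_vector_mul_assoc matrix_mul_assoc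
          sum.atLeastLessThan_Suc aprod_le)
  qed (simp add: XS_le)
qed (simp add: XS_le)

lemma XS_impulse_at:
  assumes "t \<le> k" "k < sN S"
  shows "XS S t 0 ((\<lambda>_. 0)(k := d)) k = (\<Sum>i=t..<k. transpose (Dm S i k) *v d)"
  unfolding XS_impulse_until[OF assms(1) order.refl]
  using assms(2)
  by (intro sum.cong) (simp_all add: piS_impulse_before Dm_def matrix_transpose_mul matrix_vector_mul_assoc)

lemma XS_impulse_Suc:
  assumes "t \<le> k" "k \<le> j"
  shows "XS S t 0 ((\<lambda>_. 0)(k := d)) (Suc j)
    = At S j *v XS S t 0 ((\<lambda>_. 0)(k := d)) j + (if j = k then Bt S k *v d else 0)"
  using assms piS_impulse_after[of k "Suc j" S d] by (simp add: XS_Suc)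

lemma alpha_impulse:
  "k \<le> j \<Longrightarrow> alpha S t 0 ((\<lambda>_. 0)(k := d)) j
     = - (H1 S j *v XS S t 0 ((\<lambda>_. 0)(k := d)) j + (if j = k then H2 S k *v d else 0))"
  using piS_impulse_after[of k "Suc j" S d] by (simp add: alpha_def)

lemma J2_form_impulse_response:
  fixes S :: "('n::finite, 'm1::finite, 'm2::finite) lqgame" and d :: "real^'m2"
  assumes "t \<le> k" "k < sN S"
  defines "e \<equiv> (\<lambda>_. 0)(k := d)"
  shows "J2_form S k (XS S t x v) (alpha S t x v) v (traj S k 0 (alpha S t 0 e) e) (alpha S t 0 e) e
    = d \<bullet> leader_gradient S t x v k"
proof -
  define N where "N = sN S"
  define X where "X = XS S t x v"
  define u where "u = alpha S t x v"
  define Z where "Z = ZS S t x v"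
  define Zb where "Zb = ZbarS S t x v k"
  define dX where "dX = XS S t 0 e"
  define du where "du = alpha S t 0 e"
  define dY where "dY = traj S k 0 du e"
  define a where "a = (\<Sum>i=t..<k. transpose (Dm S i k) *v d)"
  have "k < N"
    using assms(2) by (simp add: N_def)
  have dX_k: "dX k = a"
    using XS_impulse_at[OF assms(1,2)] by (simp add: dX_def a_def e_def)
  have dX_Suc: "k \<le> j \<Longrightarrow> dX (Suc j) = At S j *v dX j + (if j = k then Bt S k *v d else 0)" for j
    using XS_impulse_Suc[OF assms(1), where S = S and d = d] by (simp add: dX_def e_def)
  have du_eq: "k \<le> j \<Longrightarrow> du j = - (H1 S j *v dX j + (if j = k then H2 S k *v d else 0))" for j
    using alpha_impulse[where S = S and t = t and d = d] by (simp add: du_def dX_def e_def)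
  have state_part: "(\<Sum>j=k..<N. dY j \<bullet> (sQ2 S *v X j)) + dY N \<bullet> (sG2 S *v X N)
      = (\<Sum>j=k..<N. (sB1 S *v du j + sB2 S *v e j) \<bullet> Z (Suc j))"
    using adjoint_summation_by_parts[of k N dY "\<lambda>_. sA S" "\<lambda>j. sB1 S *v du j + sB2 S *v e j"
        Z "\<lambda>j. sQ2 S *v X j"] \<open>k < N\<close>
    by (simp add: dY_def traj_le traj_Suc Z_def X_def N_def ZS_less ZS_last)
  have feedback_part: "(\<Sum>j=Suc k..<N. (sB1 S *v du j) \<bullet> Z (Suc j) + du j \<bullet> (sR2 S *v u j))
      = dX (Suc k) \<bullet> Zb (Suc k)"
  proof -
    have "(\<Sum>j=Suc k..<N. dX j \<bullet> ((- transpose (H1 S j)) *v (sR2 S *v u j + transpose (sB1 S) *v Z (Suc j))))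
        + dX N \<bullet> Zb N = dX (Suc k) \<bullet> Zb (Suc k)"
      using adjoint_summation_by_parts[of "Suc k" N dX "At S" "\<lambda>_. 0" Zb
          "\<lambda>j. (- transpose (H1 S j)) *v (sR2 S *v u j + transpose (sB1 S) *v Z (Suc j))"] \<open>k < N\<close>
      by (simp add: dX_Suc Zb_def u_def Z_def N_def ZbarS_less)
    moreover have "dX j \<bullet> ((- transpose (H1 S j)) *v (sR2 S *v u j + transpose (sB1 S) *v Z (Suc j)))
        = (sB1 S *v du j) \<bullet> Z (Suc j) + du j \<bullet> (sR2 S *v u j)" if "k < j" for j
      using that du_eq[of j]
      by (simp add: matrix_vector_mult_uminus_left matrix_vector_mult_uminus_right inner_transpose_right
          inner_add_right algebra_simps)
    ultimately show ?thesis
      by (simp add: Zb_def N_def ZbarS_last)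
  qed
  have control_part: "(\<Sum>j=k..<N. e j \<bullet> (sW2 S *v v j)) = d \<bullet> (sW2 S *v v k)"
    using \<open>k < N\<close> by (simp add: sum.atLeast_Suc_lessThan e_def)
  have "J2_form S k X u v dY du e
      = (\<Sum>j=k..<N. (sB1 S *v du j + sB2 S *v e j) \<bullet> Z (Suc j) + du j \<bullet> (sR2 S *v u j))
        + d \<bullet> (sW2 S *v v k)"
    using state_part control_part by (simp add: J2_form_def N_def[symmetric] sum.distrib)
  also have "\<dots> = (sB1 S *v du k + sB2 S *v d) \<bullet> Z (Suc k) + du k \<bullet> (sR2 S *v u k)
        + dX (Suc k) \<bullet> Zb (Suc k) + d \<bullet> (sW2 S *v v k)"
    using \<open>k < N\<close> feedback_part[symmetric] by (simp add: sum.atLeast_Suc_lessThan e_def)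
  also have "\<dots> = d \<bullet> leader_gradient S t x v k"
  proof -
    have du_k: "du k = - (H1 S k *v a + H2 S k *v d)"
      using du_eq[of k] dX_k by simp
    have dX_Suc_k: "dX (Suc k) = At S k *v a + Bt S k *v d"
      using dX_Suc[of k] dX_k by simp
    have D: "d \<bullet> ((\<Sum>i=t..<k. Dm S i k) *v y) = a \<bullet> y" for y
      using inner_sum_transpose_left[of "\<lambda>i. Dm S i k" d "{t..<k}"] by (simp add: a_def)
    show ?thesis
      unfolding du_k dX_Suc_k leader_gradient_def Let_def u_def[symmetric] Z_def[symmetric] Zb_def[symmetric]
      by (simp add: D Bt_def inner_add_left inner_add_right inner_diff_right inner_transpose_right
          matrix_vector_right_distrib matrix_vector_mult_diff_distrib matrix_vector_mult_diff_rdistrib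
          matrix_vector_mult_uminus_right matrix_vector_mul_assoc[symmetric] algebra_simps)
  qed
  finally show ?thesis
    by (simp add: X_def u_def dY_def du_def)
qed

lemma J2_stage_deviation:
  fixes S :: "('n::finite, 'm1::finite, 'm2::finite) lqgame" and d :: "real^'m2"
  assumes "t \<le> k" "k < sN S"
    and "nnd (sQ2 S)" "nnd (sR2 S)" "nnd (sW2 S)" "nnd (sG2 S)"
  shows "\<exists>q\<ge>0. \<forall>r. J2 S k (XS S t x v k) (alpha S t x (v(k := v k + r *\<^sub>R d))) (v(k := v k + r *\<^sub>R d))
    = J2 S k (XS S t x v k) (alpha S t x v) v + 2 * r * (d \<bullet> leader_gradient S t x v k) + r\<^sup>2 * q"
proof -
  define e where "e = (\<lambda>_. 0)(k := d)"
  have deviation: "v(k := v k + r *\<^sub>R d) = (\<lambda>j. v j + r *\<^sub>R e j)" for r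
    by (simp add: e_def fun_eq_iff)
  have response: "alpha S t x (\<lambda>j. v j + r *\<^sub>R e j) = (\<lambda>j. alpha S t x v j + r *\<^sub>R alpha S t 0 e j)" for r
    by (simp add: alpha_add_scaleR fun_eq_iff)
  have "J2_form S k (traj S k (XS S t x v k) (alpha S t x v) v) (alpha S t x v) v
      (traj S k 0 (alpha S t 0 e) e) (alpha S t 0 e) e
    = J2_form S k (XS S t x v) (alpha S t x v) v (traj S k 0 (alpha S t 0 e) e) (alpha S t 0 e) e"
    (is "?linear = _")
    using assms(1,2) by (intro J2_form_state_cong) (simp_all add: traj_eq_XS)
  also have "\<dots> = d \<bullet> leader_gradient S t x v k"
    unfolding e_def by (rule J2_form_impulse_response[OF assms(1,2)])
  finally have linear_term: "?linear = d \<bullet> leader_gradient S t x v k" .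
  show ?thesis
    unfolding deviation response J2_add_scaleR[OF assms(3-6)] linear_term
    using J2_nonneg[OF assms(3-6)] by blast
qed

lemma leader_stage_optimal_iff_gradient_zero:
  fixes S :: "('n::finite, 'm1::finite, 'm2::finite) lqgame"
  assumes "t \<le> k" "k < sN S"
    and "nnd (sQ2 S)" "nnd (sR2 S)" "nnd (sW2 S)" "nnd (sG2 S)"
  shows "(\<forall>w. J2 S k (XS S t x v k) (alpha S t x v) v
        \<le> J2 S k (XS S t x v k) (alpha S t x (v(k := w))) (v(k := w)))
     \<longleftrightarrow> leader_gradient S t x v k = 0"
  using J2_stage_deviation[OF assms] quadratic_minimum_iff_gradient_zero[of
      "\<lambda>w. J2 S k (XS S t x v k) (alpha S t x (v(k := w))) (v(k := w))" "v k" "leader_gradient S t x v k"]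
  by simp

lemma cond_i_iff_cond_ii:
  fixes S :: "('n::finite, 'm1::finite, 'm2::finite) lqgame"
  assumes "nnd (sQ2 S)" "nnd (sR2 S)" "nnd (sW2 S)" "nnd (sG2 S)"
  shows "cond_i S t x v \<longleftrightarrow> cond_ii S t x v"
proof -
  have "traj S t x (alpha S t x v) v k = XS S t x v k" if "t \<le> k" for k
    using traj_eq_XS[OF order.refl that, of S x v] by (simp add: XS_le)
  then show ?thesis
    unfolding cond_i_def cond_ii_iff_leader_gradient Let_def
    using leader_stage_optimal_iff_gradient_zero[OF _ _ assms] by simp
qed

theorem theorem2:
  fixes S :: "('n::finite, 'm1::finite, 'm2::finite) lqgame"
    and t :: nat and x :: "real^'n"
  assumes "sN S > 2" and "t < sN S"
    and "nnd (sQ1 S)" "nnd (sQ2 S)" "nnd (sG1 S)" "nnd (sG2 S)"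
    and "nnd (sR1 S)" "nnd (sR2 S)" "nnd (sW1 S)" "nnd (sW2 S)"
    and "\<forall>k\<in>{t..<sN S}. posdef (Mk S k)"
  shows "(uniq_on t (sN S) (cond_i S t x) \<longleftrightarrow> uniq_on t (sN S) (cond_ii S t x))
       \<and> (uniq_on t (sN S) (cond_ii S t x) \<longrightarrow> (\<forall>v. cond_ii S t x v \<longrightarrow> cond_i S t x v))"
proof -
  (* The equivalence holds candidate by candidate and needs only the nonnegativity of the
     leader's weights. *)
  have "cond_i S t x = cond_ii S t x"
    using cond_i_iff_cond_ii[OF assms(4,8,10,6)] by blast
  then show ?thesis
    by simp
qed

end
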